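(* Let $n\geq 2$, $1\leq j\leq n$ and $1\leq k\leq n-1$. Let $p_{n,k}(j)$ be the probability that the value $j$ is a $k$-peak of a uniformly random permutation in $\mathfrak{S}_n$. Then $$p_{n,k}(j)=\begin{cases}0 & \text{if } j\leq k,\\[2pt] \dfrac{(j-k)(j-k+1)}{(n-k)(n-k+1)} & \text{if } j>k.\end{cases}$$
   Context: $\mathfrak{S}_n$ is the set of permutations $w=w_1\cdots w_n$ of $\{1,\dots,n\}$. A section of $w$ is a consecutive block $w_s\cdots w_t$ ($s\le t$). A section $w_s\cdots w_t$ is a $k$-up if $s<t$ and $w_t-w_s\geq k$, and a $k$-down if $s<t$ and $w_s-w_t\geq k$; a $k$-up/$k$-down "in" $w_a\cdots w_b$ means one $w_s\cdots w_t$ with $a\le s<t\le b$. A section $w_i\cdots w_j$ ($i<j$) is $k$-ascending if $w_i=\min\{w_i,\dots,w_j\}$, $w_j=\max\{w_i,\dots,w_j\}$, $w_j-w_i\geq k$, and there is no $k$-down in it; it is $k$-descending if $w_i=\max$, $w_j=\min$ of $\{w_i,\dots,w_j\}$, $w_i-w_j\geq k$, and there is no $k$-up in it. Such a section is maximal if not contained in another section of the same type. An entry $w_i$ is a $k$-peak of $w$ if it is the last entry of a maximal $k$-ascending section or the first entry of a maximal $k$-descending section; "the value $j$ is a $k$-peak" means the entry $w_i=j$ is a $k$-peak. *)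

theory Defs
  imports Main "HOL-Combinatorics.Multiset_Permutations"
begin

text \<open>A permutation w = w_1 ... w_n of {1..n} is a list; positions are 0-based
  (list index i corresponds to w_{i+1}). A section is a pair of indices (s,t), s \<le> t.\<close>

definition k_up :: "nat list \<Rightarrow> nat \<Rightarrow> nat \<Rightarrow> nat \<Rightarrow> bool" where
  "k_up w k s t \<longleftrightarrow> s < t \<and> t < length w \<and> w ! s + k \<le> w ! t"

definition k_down :: "nat list \<Rightarrow> nat \<Rightarrow> nat \<Rightarrow> nat \<Rightarrow> bool" where
  "k_down w k s t \<longleftrightarrow> s < t \<and> t < length w \<and> w ! t + k \<le> w ! s"

definition k_up_in :: "nat list \<Rightarrow> nat \<Rightarrow> nat \<Rightarrow> nat \<Rightarrow> bool" where
  "k_up_in w k a b \<longleftrightarrow> (\<exists>s t. a \<le> s \<and> s < t \<and> t \<le> b \<and> k_up w k s t)"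

definition k_down_in :: "nat list \<Rightarrow> nat \<Rightarrow> nat \<Rightarrow> nat \<Rightarrow> bool" where
  "k_down_in w k a b \<longleftrightarrow> (\<exists>s t. a \<le> s \<and> s < t \<and> t \<le> b \<and> k_down w k s t)"

definition k_ascending :: "nat list \<Rightarrow> nat \<Rightarrow> nat \<Rightarrow> nat \<Rightarrow> bool" where
  "k_ascending w k i j \<longleftrightarrow> i < j \<and> j < length w \<and>
     w ! i = Min ((!) w ` {i..j}) \<and> w ! j = Max ((!) w ` {i..j}) \<and>
     w ! i + k \<le> w ! j \<and> \<not> k_down_in w k i j"

definition k_descending :: "nat list \<Rightarrow> nat \<Rightarrow> nat \<Rightarrow> nat \<Rightarrow> bool" where
  "k_descending w k i j \<longleftrightarrow> i < j \<and> j < length w \<and>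
     w ! i = Max ((!) w ` {i..j}) \<and> w ! j = Min ((!) w ` {i..j}) \<and>
     w ! j + k \<le> w ! i \<and> \<not> k_up_in w k i j"

definition max_k_ascending :: "nat list \<Rightarrow> nat \<Rightarrow> nat \<Rightarrow> nat \<Rightarrow> bool" where
  "max_k_ascending w k i j \<longleftrightarrow> k_ascending w k i j \<and>
     \<not> (\<exists>i' j'. i' \<le> i \<and> j \<le> j' \<and> (i', j') \<noteq> (i, j) \<and> k_ascending w k i' j')"

definition max_k_descending :: "nat list \<Rightarrow> nat \<Rightarrow> nat \<Rightarrow> nat \<Rightarrow> bool" where
  "max_k_descending w k i j \<longleftrightarrow> k_descending w k i j \<and>
     \<not> (\<exists>i' j'. i' \<le> i \<and> j \<le> j' \<and> (i', j') \<noteq> (i, j) \<and> k_descending w k i' j')"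

definition k_peak_pos :: "nat list \<Rightarrow> nat \<Rightarrow> nat \<Rightarrow> bool" where
  "k_peak_pos w k i \<longleftrightarrow> (\<exists>s. max_k_ascending w k s i) \<or> (\<exists>t. max_k_descending w k i t)"

definition is_k_peak_value :: "nat list \<Rightarrow> nat \<Rightarrow> nat \<Rightarrow> bool" where
  "is_k_peak_value w k v \<longleftrightarrow> (\<exists>i < length w. w ! i = v \<and> k_peak_pos w k i)"

definition p_peak :: "nat \<Rightarrow> nat \<Rightarrow> nat \<Rightarrow> real" where
  "p_peak n k j = real (card {w \<in> permutations_of_set {1..n}. is_k_peak_value w k j})
                  / real (card (permutations_of_set {1..n}))"

end

theory Submission
  imports Defs
begin

text \<open>Call an entry low if it is at most \<open>j - k\<close>, high if it exceeds \<open>j\<close>, and transparent otherwise.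
  The value \<open>j\<close> is a \<open>k\<close>-peak exactly when some entry is low and, looking outward from \<open>j\<close> in
  either direction, the first entry that is not transparent is low: a maximal \<open>k\<close>-ascending section
  ending at \<open>j\<close> starts at the nearest low entry on its left, and it cannot be prolonged precisely
  when on the right a low entry comes before any high one; maximal \<open>k\<close>-descending sections are
  the same picture for the reversed word. Counting permutations with this property by their
  first entry gives recurrences in the numbers \<open>l = j - k\<close> of low and \<open>h = n - j\<close> of high values,
  solved by the probability \<open>l (l + 1) / ((l + h + 1) (l + h))\<close>, whatever the transparent values.\<close>

definition perm_count :: "('a list \<Rightarrow> bool) \<Rightarrow> 'a set \<Rightarrow> nat" where
  "perm_count P A = card {w \<in> permutations_of_set A. P w}"

lemma perm_count_Cons:
  assumes "finite A" "A \<noteq> {}"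
  shows "perm_count P A = (\<Sum>x\<in>A. perm_count (\<lambda>v. P (x # v)) (A - {x}))"
proof -
  have "{w \<in> permutations_of_set A. P w} =
      (\<Union>x\<in>A. (#) x ` {v \<in> permutations_of_set (A - {x}). P (x # v)})"
    using permutations_of_set_nonempty[OF assms(2)] by auto
  also have "card \<dots> = (\<Sum>x\<in>A. card ((#) x ` {v \<in> permutations_of_set (A - {x}). P (x # v)}))"
    by (rule card_UN_disjoint) (auto simp: assms)
  also have "\<dots> = (\<Sum>x\<in>A. card {v \<in> permutations_of_set (A - {x}). P (x # v)})"
    by (intro sum.cong refl card_image) (auto simp: inj_on_def)
  finally show ?thesis
    unfolding perm_count_def .
qed

lemma perm_count_mono: "(\<And>w. P w \<Longrightarrow> Q w) \<Longrightarrow> perm_count P A \<le> perm_count Q A"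
  unfolding perm_count_def by (rule card_mono) auto

lemma card_filter_remove:
  assumes "finite A" "x \<in> A"
  shows "card {y \<in> A. P y} = card {y \<in> A - {x}. P y} + (if P x then 1 else 0)"
proof -
  have "{y \<in> A - {x}. P y} = {y \<in> A. P y} - {x}" by auto
  then show ?thesis
    using assms card_Suc_Diff1[of "{y \<in> A. P y}" x] by auto
qed

lemma append_Cons_eq_first_occurrence:
  "xs @ c # ys = xs' @ c # ys' \<Longrightarrow> c \<notin> set xs \<Longrightarrow> c \<notin> set xs' \<Longrightarrow> xs = xs' \<and> ys = ys'"
  by (induction xs arbitrary: xs') (auto simp: Cons_eq_append_conv)

lemma nth_append_Cons_Suc: "(xs @ x # ys) ! Suc (length xs + q) = ys ! q"
  by (simp add: nth_append)

section \<open>\<open>k\<close>-ascending sections and reversal\<close>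

lemma k_ascending_iff:
  "k_ascending w k s t \<longleftrightarrow> s < t \<and> t < length w \<and>
    (\<forall>r. s \<le> r \<longrightarrow> r \<le> t \<longrightarrow> w ! s \<le> w ! r \<and> w ! r \<le> w ! t) \<and> w ! s + k \<le> w ! t \<and>
    (\<forall>a b. s \<le> a \<longrightarrow> a < b \<longrightarrow> b \<le> t \<longrightarrow> w ! a < w ! b + k)"
  (is "_ \<longleftrightarrow> s < t \<and> t < length w \<and> ?bounds \<and> _ \<and> ?no_down")
proof
  assume asc: "k_ascending w k s t"
  then have "?bounds"
    unfolding k_ascending_def by (metis Min_le Max_ge atLeastAtMost_iff finite_atLeastAtMost finite_imageI image_eqI)
  moreover have "?no_down"
  proof (intro allI impI)
    fix a b assume ab: "s \<le> a" "a < b" "b \<le> t"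
    then have "\<not> k_down w k a b"
      using asc unfolding k_ascending_def k_down_in_def by blast
    then show "w ! a < w ! b + k"
      using asc ab unfolding k_ascending_def k_down_def by auto
  qed
  ultimately show "s < t \<and> t < length w \<and> ?bounds \<and> w ! s + k \<le> w ! t \<and> ?no_down"
    using asc by (simp add: k_ascending_def)
next
  assume asc: "s < t \<and> t < length w \<and> ?bounds \<and> w ! s + k \<le> w ! t \<and> ?no_down"
  then have "Min ((!) w ` {s..t}) = w ! s" "Max ((!) w ` {s..t}) = w ! t"
    by (auto intro!: Min_eqI Max_eqI)
  moreover have "\<not> k_down_in w k s t"
    using asc unfolding k_down_in_def k_down_def by fastforce
  ultimately show "k_ascending w k s t"
    using asc by (simp add: k_ascending_def)
qed


lemma image_nth_rev_interval:
  assumes "i \<le> t" "t < length w"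
  shows "(!) (rev w) ` {length w - 1 - t..length w - 1 - i} = (!) w ` {i..t}"
proof
  show "(!) (rev w) ` {length w - 1 - t..length w - 1 - i} \<subseteq> (!) w ` {i..t}"
  proof
    fix v assume "v \<in> (!) (rev w) ` {length w - 1 - t..length w - 1 - i}"
    then obtain r where "r \<in> {length w - 1 - t..length w - 1 - i}" "v = rev w ! r"
      by blast
    with assms show "v \<in> (!) w ` {i..t}"
      by (intro image_eqI[of _ _ "length w - 1 - r"]) (auto simp: rev_nth)
  qed
next
  show "(!) w ` {i..t} \<subseteq> (!) (rev w) ` {length w - 1 - t..length w - 1 - i}"
  proof
    fix v assume "v \<in> (!) w ` {i..t}"
    then obtain r where "r \<in> {i..t}" "v = w ! r"
      by blast
    with assms show "v \<in> (!) (rev w) ` {length w - 1 - t..length w - 1 - i}"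
      by (intro image_eqI[of _ _ "length w - 1 - r"]) (auto simp: rev_nth)
  qed
qed

lemma k_down_in_rev_iff:
  assumes "i < length w" "t < length w"
  shows "k_down_in (rev w) k (length w - 1 - t) (length w - 1 - i) \<longleftrightarrow> k_up_in w k i t"
proof
  assume "k_down_in (rev w) k (length w - 1 - t) (length w - 1 - i)"
  then obtain a b where "length w - 1 - t \<le> a" "a < b" "b \<le> length w - 1 - i" "rev w ! b + k \<le> rev w ! a"
    unfolding k_down_in_def k_down_def by auto
  with assms show "k_up_in w k i t"
    unfolding k_up_in_def k_up_def
    by (intro exI[of _ "length w - 1 - b"] exI[of _ "length w - 1 - a"]) (auto simp: rev_nth)
next
  assume "k_up_in w k i t"
  then obtain a b where "i \<le> a" "a < b" "b \<le> t" "w ! a + k \<le> w ! b"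
    unfolding k_up_in_def k_up_def by auto
  with assms show "k_down_in (rev w) k (length w - 1 - t) (length w - 1 - i)"
    unfolding k_down_in_def k_down_def
    by (intro exI[of _ "length w - 1 - b"] exI[of _ "length w - 1 - a"]) (auto simp: rev_nth)
qed

lemma k_descending_iff_k_ascending_rev:
  assumes "i < length w" "t < length w"
  shows "k_descending w k i t \<longleftrightarrow> k_ascending (rev w) k (length w - 1 - t) (length w - 1 - i)"
  using assms image_nth_rev_interval[of i t w] k_down_in_rev_iff[OF assms, of k]
  by (cases "i < t") (auto simp: k_descending_def k_ascending_def rev_nth)

lemma max_k_descending_iff_max_k_ascending_rev:
  assumes "i < length w" "t < length w"
  shows "max_k_descending w k i t \<longleftrightarrow> max_k_ascending (rev w) k (length w - 1 - t) (length w - 1 - i)"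
proof -
  let ?m = "\<lambda>p. length w - 1 - p"
  have "(\<exists>a b. a \<le> i \<and> t \<le> b \<and> (a, b) \<noteq> (i, t) \<and> k_descending w k a b) \<longleftrightarrow>
      (\<exists>a b. a \<le> ?m t \<and> ?m i \<le> b \<and> (a, b) \<noteq> (?m t, ?m i) \<and> k_ascending (rev w) k a b)"
  proof
    assume "\<exists>a b. a \<le> i \<and> t \<le> b \<and> (a, b) \<noteq> (i, t) \<and> k_descending w k a b"
    then obtain a b where ab: "a \<le> i" "t \<le> b" "(a, b) \<noteq> (i, t)" "k_descending w k a b"
      by blast
    then have "a < length w" "b < length w"
      by (auto simp: k_descending_def)
    with ab assms show "\<exists>a b. a \<le> ?m t \<and> ?m i \<le> b \<and> (a, b) \<noteq> (?m t, ?m i) \<and> k_ascending (rev w) k a b"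
      by (intro exI[of _ "?m b"] exI[of _ "?m a"]) (auto simp: k_descending_iff_k_ascending_rev)
  next
    assume "\<exists>a b. a \<le> ?m t \<and> ?m i \<le> b \<and> (a, b) \<noteq> (?m t, ?m i) \<and> k_ascending (rev w) k a b"
    then obtain a b where ab: "a \<le> ?m t" "?m i \<le> b" "(a, b) \<noteq> (?m t, ?m i)" "k_ascending (rev w) k a b"
      by blast
    then have "a < length w" "b < length w"
      by (auto simp: k_ascending_def)
    with ab assms show "\<exists>a b. a \<le> i \<and> t \<le> b \<and> (a, b) \<noteq> (i, t) \<and> k_descending w k a b"
      by (intro exI[of _ "?m b"] exI[of _ "?m a"]) (auto simp: k_descending_iff_k_ascending_rev)
  qed
  then show ?thesis
    using assms by (simp add: max_k_descending_def max_k_ascending_def k_descending_iff_k_ascending_rev)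
qed

lemma ex_max_k_descending_iff_rev:
  assumes "i < length w"
  shows "(\<exists>t. max_k_descending w k i t) \<longleftrightarrow> (\<exists>s. max_k_ascending (rev w) k s (length w - 1 - i))"
proof
  assume "\<exists>t. max_k_descending w k i t"
  then obtain t where "max_k_descending w k i t"
    by blast
  moreover from this have "t < length w"
    by (simp add: max_k_descending_def k_descending_def)
  ultimately show "\<exists>s. max_k_ascending (rev w) k s (length w - 1 - i)"
    using assms max_k_descending_iff_max_k_ascending_rev by blast
next
  assume "\<exists>s. max_k_ascending (rev w) k s (length w - 1 - i)"
  then obtain s where s: "max_k_ascending (rev w) k s (length w - 1 - i)"
    by blast
  moreover from this have "s < length w"
    by (simp add: max_k_ascending_def k_ascending_def)
  ultimately have "max_k_descending w k i (length w - 1 - s)"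
    using assms max_k_descending_iff_max_k_ascending_rev[of i w "length w - 1 - s"] by simp
  then show "\<exists>t. max_k_descending w k i t"
    by blast
qed

section \<open>Low, high and transparent entries\<close>

text \<open>In the application \<open>low x \<longleftrightarrow> x + k \<le> j\<close>, \<open>high x \<longleftrightarrow> j < x\<close> and \<open>c = j\<close>; the \<open>mid\<close> entries
  are the transparent ones.\<close>

locale low_high =
  fixes low high :: "'a \<Rightarrow> bool" and c :: 'a
  assumes low_not_high: "low x \<Longrightarrow> \<not> high x"
    and c_not_low: "\<not> low c" and c_not_high: "\<not> high c"
begin

definition mid :: "'a \<Rightarrow> bool" where "mid x \<longleftrightarrow> \<not> low x \<and> \<not> high x"

fun low_first :: "'a list \<Rightarrow> bool" where
  "low_first [] = True"
| "low_first (x # v) \<longleftrightarrow> low x \<or> (\<not> high x \<and> low_first v)"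

definition low_flanked :: "'a list \<Rightarrow> bool" where
  "low_flanked w \<longleftrightarrow>
     (\<exists>xs ys. w = xs @ c # ys \<and> c \<notin> set xs \<and> low_first (rev xs) \<and> low_first ys)"

definition right_flanked :: "'a list \<Rightarrow> bool" where
  "right_flanked w \<longleftrightarrow>
     (\<exists>xs ys. w = xs @ c # ys \<and> c \<notin> set xs \<and> (\<forall>x\<in>set xs. mid x) \<and> low_first ys)"

definition nlow :: "'a set \<Rightarrow> nat" where "nlow A = card {x \<in> A. low x}"
definition nhigh :: "'a set \<Rightarrow> nat" where "nhigh A = card {x \<in> A. high x}"

lemma low_first_append:
  "low_first (u @ v) \<longleftrightarrow> low_first u \<and> ((\<forall>x\<in>set u. mid x) \<longrightarrow> low_first v)"
  by (induction u) (auto simp: mid_def dest: low_not_high)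

lemma low_first_if_no_high: "\<forall>x\<in>set v. \<not> high x \<Longrightarrow> low_first v"
  by (induction v) auto

lemma no_high_if_low_first_no_low:
  "low_first v \<Longrightarrow> \<forall>x\<in>set v. \<not> low x \<Longrightarrow> \<forall>x\<in>set v. \<not> high x"
  by (induction v) auto

lemma low_before_high_if_low_first:
  "low_first (us @ y # vs) \<Longrightarrow> high y \<Longrightarrow> \<exists>x\<in>set us. low x"
  by (induction us) (auto dest: low_not_high)

lemma split_high_if_not_low_first:
  "\<not> low_first v \<Longrightarrow> \<exists>us y vs. v = us @ y # vs \<and> (\<forall>x\<in>set us. mid x) \<and> high y"
proof (induction v)
  case (Cons x v)
  show ?case
  proof (cases "high x")
    case False
    with Cons obtain us y vs where "v = us @ y # vs" "\<forall>x\<in>set us. mid x" "high y"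
      by auto
    with Cons.prems False show ?thesis
      by (intro exI[of _ "x # us"]) (auto simp: mid_def)
  qed (intro exI[of _ "[]"], simp)
qed simp

lemma split_low_if_low_first:
  "low_first v \<Longrightarrow> \<exists>x\<in>set v. low x \<Longrightarrow> \<exists>us y vs. v = us @ y # vs \<and> (\<forall>x\<in>set us. mid x) \<and> low y"
proof (induction v)
  case (Cons x v)
  show ?case
  proof (cases "low x")
    case False
    with Cons obtain us y vs where "v = us @ y # vs" "\<forall>x\<in>set us. mid x" "low y"
      by auto
    with Cons.prems False show ?thesis
      by (intro exI[of _ "x # us"]) (auto simp: mid_def)
  qed (intro exI[of _ "[]"], simp)
qed simp

lemma low_flanked_split:
  "c \<notin> set xs \<Longrightarrow> low_flanked (xs @ c # ys) \<longleftrightarrow> low_first (rev xs) \<and> low_first ys"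
  unfolding low_flanked_def by (auto dest: append_Cons_eq_first_occurrence)

lemma right_flanked_split:
  "c \<notin> set xs \<Longrightarrow> right_flanked (xs @ c # ys) \<longleftrightarrow> (\<forall>x\<in>set xs. mid x) \<and> low_first ys"
  unfolding right_flanked_def by (auto dest: append_Cons_eq_first_occurrence)

lemma low_flanked_Cons_c: "low_flanked (c # v) \<longleftrightarrow> low_first v"
  using low_flanked_split[of "[]"] by simp

lemma right_flanked_Cons_c: "right_flanked (c # v) \<longleftrightarrow> low_first v"
  using right_flanked_split[of "[]"] by simp

lemma c_in_set_if_low_flanked: "low_flanked w \<Longrightarrow> c \<in> set w"
  unfolding low_flanked_def by auto

lemma c_in_set_if_right_flanked: "right_flanked w \<Longrightarrow> c \<in> set w"
  unfolding right_flanked_def by auto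

lemma low_flanked_Cons:
  assumes "x \<noteq> c"
  shows "low_flanked (x # v) \<longleftrightarrow>
    (if high x then low_flanked v \<and> \<not> right_flanked v else low_flanked v)"
proof (cases "c \<in> set v")
  case True
  then obtain xs ys where v: "v = xs @ c # ys" "c \<notin> set xs"
    using split_list_first by metis
  have "low_flanked (x # v) \<longleftrightarrow> low_first (rev xs @ [x]) \<and> low_first ys"
    using v assms low_flanked_split[of "x # xs"] by simp
  moreover have "low_flanked v \<longleftrightarrow> low_first (rev xs) \<and> low_first ys"
    using v low_flanked_split by simp
  moreover have "right_flanked v \<longleftrightarrow> (\<forall>x\<in>set xs. mid x) \<and> low_first ys"
    using v right_flanked_split by simp
  ultimately show ?thesis
    using low_not_high[of x] by (cases "high x") (simp_all add: low_first_append, blast)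
qed (use assms c_in_set_if_low_flanked[of "x # v"] c_in_set_if_low_flanked[of v] in auto)

lemma right_flanked_Cons:
  assumes "x \<noteq> c"
  shows "right_flanked (x # v) \<longleftrightarrow> mid x \<and> right_flanked v"
proof (cases "c \<in> set v")
  case True
  then obtain xs ys where v: "v = xs @ c # ys" "c \<notin> set xs"
    using split_list_first by metis
  then show ?thesis
    using assms right_flanked_split[of "x # xs"] right_flanked_split[of xs] by simp
qed (use assms c_in_set_if_right_flanked[of "x # v"] c_in_set_if_right_flanked[of v] in auto)

lemma low_flanked_if_right_flanked: "right_flanked w \<Longrightarrow> low_flanked w"
  unfolding right_flanked_def low_flanked_def
  by (fastforce simp: mid_def intro: low_first_if_no_high)


lemma low_flanked_if_no_high:
  assumes "c \<in> set w" "\<forall>x\<in>set w. \<not> high x"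
  shows "low_flanked w"
proof -
  obtain xs ys where "w = xs @ c # ys" "c \<notin> set xs"
    using split_list_first[OF assms(1)] by blast
  then show ?thesis
    using assms(2) by (simp add: low_flanked_split low_first_if_no_high)
qed

lemma no_high_if_low_flanked_no_low:
  assumes "low_flanked w" "\<forall>x\<in>set w. \<not> low x"
  shows "\<forall>x\<in>set w. \<not> high x"
proof -
  obtain xs ys where w: "w = xs @ c # ys" "low_first (rev xs)" "low_first ys"
    using assms(1) unfolding low_flanked_def by blast
  then show ?thesis
    using assms(2) no_high_if_low_first_no_low[of "rev xs"] no_high_if_low_first_no_low[of ys]
      c_not_high by auto
qed

lemma nlow_remove: "finite A \<Longrightarrow> x \<in> A \<Longrightarrow> nlow A = nlow (A - {x}) + (if low x then 1 else 0)"
  unfolding nlow_def by (rule card_filter_remove)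

lemma nhigh_remove: "finite A \<Longrightarrow> x \<in> A \<Longrightarrow> nhigh A = nhigh (A - {x}) + (if high x then 1 else 0)"
  unfolding nhigh_def by (rule card_filter_remove)

lemma sum_by_class:
  fixes f :: "'a \<Rightarrow> real" and a b d :: real
  assumes "finite A"
    and "\<And>x. x \<in> A \<Longrightarrow> low x \<Longrightarrow> f x = a"
    and "\<And>x. x \<in> A \<Longrightarrow> high x \<Longrightarrow> f x = b"
    and "\<And>x. x \<in> A \<Longrightarrow> mid x \<Longrightarrow> f x = d"
  shows "sum f A = nlow A * a + nhigh A * b + (real (card A) - nlow A - nhigh A) * d"
  using assms
proof (induction A rule: finite_induct)
  case (insert x F)
  have "nlow (insert x F) = nlow F + (if low x then 1 else 0)"
    "nhigh (insert x F) = nhigh F + (if high x then 1 else 0)"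
    using nlow_remove[of "insert x F" x] nhigh_remove[of "insert x F" x] insert.hyps by auto
  then show ?case
    using insert low_not_high[of x] by (auto simp: mid_def algebra_simps)
qed (simp add: nlow_def nhigh_def)

lemma perm_count_low_first_recurrence:
  assumes "finite A" "A \<noteq> {}"
  shows "perm_count low_first A =
    (\<Sum>x\<in>A. if low x then fact (card A - 1) else if high x then 0 else perm_count low_first (A - {x}))"
  unfolding perm_count_Cons[OF assms]
  by (intro sum.cong refl) (auto simp: perm_count_def assms(1) dest: low_not_high)

lemma perm_count_right_flanked_recurrence:
  assumes "finite A" "c \<in> A"
  shows "perm_count right_flanked A = perm_count low_first (A - {c})
    + (\<Sum>x\<in>A - {c}. if mid x then perm_count right_flanked (A - {x}) else 0)"
proof -
  have "perm_count right_flanked A = perm_count (\<lambda>v. right_flanked (c # v)) (A - {c})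
      + (\<Sum>x\<in>A - {c}. perm_count (\<lambda>v. right_flanked (x # v)) (A - {x}))"
    using assms by (subst perm_count_Cons) (auto simp: sum.remove)
  also have "\<dots> = perm_count low_first (A - {c})
      + (\<Sum>x\<in>A - {c}. if mid x then perm_count right_flanked (A - {x}) else 0)"
  proof (intro arg_cong2[where f = "(+)"] sum.cong refl)
    fix x assume "x \<in> A - {c}"
    then show "perm_count (\<lambda>v. right_flanked (x # v)) (A - {x}) =
        (if mid x then perm_count right_flanked (A - {x}) else 0)"
      by (cases "mid x") (simp_all add: right_flanked_Cons perm_count_def)
  qed (simp add: right_flanked_Cons_c)
  finally show ?thesis .
qed

lemma perm_count_low_flanked_recurrence:
  assumes "finite A" "c \<in> A"
  shows "perm_count low_flanked A = perm_count low_first (A - {c})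
    + (\<Sum>x\<in>A - {c}. if high x then perm_count low_flanked (A - {x}) - perm_count right_flanked (A - {x})
        else perm_count low_flanked (A - {x}))"
proof -
  have diff: "perm_count (\<lambda>v. low_flanked v \<and> \<not> right_flanked v) B
      = perm_count low_flanked B - perm_count right_flanked B" for B
  proof -
    have "{v \<in> permutations_of_set B. low_flanked v \<and> \<not> right_flanked v} =
        {v \<in> permutations_of_set B. low_flanked v} - {v \<in> permutations_of_set B. right_flanked v}"
      by auto
    moreover have "{v \<in> permutations_of_set B. right_flanked v} \<subseteq> {v \<in> permutations_of_set B. low_flanked v}"
      using low_flanked_if_right_flanked by blast
    ultimately show ?thesis
      by (simp add: perm_count_def card_Diff_subset)
  qed
  have "perm_count low_flanked A = perm_count (\<lambda>v. low_flanked (c # v)) (A - {c})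
      + (\<Sum>x\<in>A - {c}. perm_count (\<lambda>v. low_flanked (x # v)) (A - {x}))"
    using assms by (subst perm_count_Cons) (auto simp: sum.remove)
  also have "\<dots> = perm_count low_first (A - {c})
      + (\<Sum>x\<in>A - {c}. if high x then perm_count low_flanked (A - {x}) - perm_count right_flanked (A - {x})
          else perm_count low_flanked (A - {x}))"
  proof (intro arg_cong2[where f = "(+)"] sum.cong refl)
    fix x assume "x \<in> A - {c}"
    then show "perm_count (\<lambda>v. low_flanked (x # v)) (A - {x}) =
        (if high x then perm_count low_flanked (A - {x}) - perm_count right_flanked (A - {x})
         else perm_count low_flanked (A - {x}))"
      by (cases "high x") (simp_all add: low_flanked_Cons flip: diff)
  qed (simp add: low_flanked_Cons_c)
  finally show ?thesis .
qed

lemma perm_count_low_first: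
  assumes "finite A" "0 < nlow A + nhigh A"
  shows "real (perm_count low_first A) = fact (card A) * real (nlow A) / real (nlow A + nhigh A)"
  using assms
proof (induction A rule: finite_psubset_induct)
  case (psubset A)
  define N l h where "N = card A" and "l = real (nlow A)" and "h = real (nhigh A)"
  have "A \<noteq> {}" "N > 0"
    using psubset.prems psubset.hyps by (auto simp: nlow_def nhigh_def N_def card_gt_0_iff)
  then have fact_N: "fact N = real N * fact (N - 1)"
    by (simp add: fact_reduce)
  have "real (perm_count low_first A) = l * fact (N - 1) + h * 0 + (real N - l - h) * (fact (N - 1) * l / (l + h))"
    unfolding perm_count_low_first_recurrence[OF psubset.hyps \<open>A \<noteq> {}\<close>] of_nat_sum N_def l_def h_def
  proof (rule sum_by_class[OF psubset.hyps])
    fix x assume x: "x \<in> A" "mid x"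
    then have same: "nlow (A - {x}) = nlow A" "nhigh (A - {x}) = nhigh A"
      using nlow_remove nhigh_remove psubset.hyps by (auto simp: mid_def)
    have "real (perm_count low_first (A - {x})) =
        fact (card (A - {x})) * real (nlow (A - {x})) / real (nlow (A - {x}) + nhigh (A - {x}))"
      using x psubset.prems by (intro psubset.IH) (auto simp: same)
    then show "real (if low x then fact (card A - 1) else if high x then 0 else perm_count low_first (A - {x})) =
        fact (card A - 1) * real (nlow A) / (real (nlow A) + real (nhigh A))"
      using x psubset.hyps by (simp add: same mid_def)
  qed (auto dest: low_not_high)
  also have "\<dots> = fact N * l / (l + h)"
  proof -
    have "l + h > 0"
      using psubset.prems by (simp add: l_def h_def flip: of_nat_add)
    then show ?thesis
      unfolding fact_N by (simp add: divide_simps) (simp add: algebra_simps)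
  qed
  finally show ?case
    by (simp add: N_def l_def h_def)
qed

lemma perm_count_right_flanked:
  assumes "finite A" "c \<in> A" "0 < nlow A + nhigh A"
  shows "real (perm_count right_flanked A) =
    fact (card A) * real (nlow A) / ((real (nlow A + nhigh A) + 1) * real (nlow A + nhigh A))"
  using assms
proof (induction A rule: finite_psubset_induct)
  case (psubset A)
  define N l s where "N = card A" and "l = real (nlow A)" and "s = real (nlow A + nhigh A)"
  have "N > 0" "s > 0"
    using psubset.prems psubset.hyps by (auto simp: N_def s_def card_gt_0_iff)
  then have fact_N: "fact N = real N * fact (N - 1)"
    by (simp add: fact_reduce)
  have same_c: "nlow (A - {c}) = nlow A" "nhigh (A - {c}) = nhigh A" "card (A - {c}) = N - 1"
    using nlow_remove nhigh_remove psubset c_not_low c_not_high by (auto simp: N_def)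
  have "real (perm_count low_first (A - {c})) = fact (N - 1) * l / s"
    using perm_count_low_first[of "A - {c}"] psubset.hyps psubset.prems by (simp add: same_c l_def s_def)
  moreover have "(\<Sum>x\<in>A - {c}. real (if mid x then perm_count right_flanked (A - {x}) else 0)) =
      real (nlow (A - {c})) * 0 + real (nhigh (A - {c})) * 0
      + (real (card (A - {c})) - nlow (A - {c}) - nhigh (A - {c})) * (fact (N - 1) * l / ((s + 1) * s))"
  proof (rule sum_by_class)
    fix x assume x: "x \<in> A - {c}" "mid x"
    then have same: "nlow (A - {x}) = nlow A" "nhigh (A - {x}) = nhigh A"
      using nlow_remove nhigh_remove psubset.hyps by (auto simp: mid_def)
    have "real (perm_count right_flanked (A - {x})) =
        fact (card (A - {x})) * real (nlow (A - {x}))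
        / ((real (nlow (A - {x}) + nhigh (A - {x})) + 1) * real (nlow (A - {x}) + nhigh (A - {x})))"
      using x psubset.prems by (intro psubset.IH) (auto simp: same)
    then show "real (if mid x then perm_count right_flanked (A - {x}) else 0) = fact (N - 1) * l / ((s + 1) * s)"
      using x psubset.hyps by (simp add: same N_def l_def s_def)
  qed (use psubset.hyps in \<open>auto simp: mid_def\<close>)
  ultimately have "real (perm_count right_flanked A) =
      fact (N - 1) * l / s + (real N - 1 - s) * (fact (N - 1) * l / ((s + 1) * s))"
    using same_c \<open>N > 0\<close> psubset.hyps psubset.prems
    by (simp add: perm_count_right_flanked_recurrence of_nat_sum s_def of_nat_diff)
  also have "\<dots> = fact N * l / ((s + 1) * s)"
    using \<open>s > 0\<close> unfolding fact_N by (simp add: divide_simps) (simp add: algebra_simps)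
  finally show ?case
    by (simp add: N_def l_def s_def)
qed

lemma perm_count_low_flanked:
  assumes "finite A" "c \<in> A" "0 < nlow A + nhigh A"
  shows "real (perm_count low_flanked A) =
    fact (card A) * (real (nlow A) * (real (nlow A) + 1))
    / ((real (nlow A + nhigh A) + 1) * real (nlow A + nhigh A))"
  using assms
proof (induction A rule: finite_psubset_induct)
  case (psubset A)
  have perm_set: "set w = A" if "w \<in> permutations_of_set A" for w
    using that by (simp add: permutations_of_set_def)
  \<comment> \<open>The recurrence can reach \<open>nlow + nhigh = 0\<close>, where the closed form is wrong (the count is
    \<open>fact (card A)\<close>); the sets without high or without low entries are therefore settled directly.\<close>
  consider "nhigh A = 0" | "nlow A = 0" | "0 < nlow A" "0 < nhigh A"
    by blast
  then show ?case
  proof cases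
    case 1
    then have "\<forall>x\<in>A. \<not> high x"
      using psubset.hyps by (simp add: nhigh_def)
    then have "{w \<in> permutations_of_set A. low_flanked w} = permutations_of_set A"
      using psubset.prems perm_set low_flanked_if_no_high by auto
    then show ?thesis
      using 1 psubset.prems psubset.hyps by (simp add: perm_count_def)
  next
    case 2
    then have "\<forall>x\<in>A. \<not> low x" "\<exists>x\<in>A. high x"
      using psubset.hyps psubset.prems by (auto simp: nlow_def nhigh_def card_gt_0_iff)
    then have "{w \<in> permutations_of_set A. low_flanked w} = {}"
      using perm_set no_high_if_low_flanked_no_low by blast
    then show ?thesis
      using 2 by (simp add: perm_count_def)
  next
    case 3
    define N l h s where "N = card A" and "l = real (nlow A)" and "h = real (nhigh A)"
      and "s = real (nlow A + nhigh A)"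
    have "N > 0" "s > 1" "s = l + h"
      using 3 psubset.prems psubset.hyps by (auto simp: N_def card_gt_0_iff s_def l_def h_def)
    then have fact_N: "fact N = real N * fact (N - 1)"
      by (simp add: fact_reduce)
    have same_c: "nlow (A - {c}) = nlow A" "nhigh (A - {c}) = nhigh A" "card (A - {c}) = N - 1"
      using nlow_remove nhigh_remove psubset c_not_low c_not_high by (auto simp: N_def)
    have IH: "real (perm_count low_flanked (A - {x})) =
        fact (N - 1) * (real (nlow (A - {x})) * (real (nlow (A - {x})) + 1))
        / ((real (nlow (A - {x}) + nhigh (A - {x})) + 1) * real (nlow (A - {x}) + nhigh (A - {x})))"
      if "x \<in> A - {c}" "0 < nlow (A - {x}) + nhigh (A - {x})" for x
      using that psubset.prems psubset.hyps by (subst psubset.IH) (auto simp: N_def)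
    have "real (perm_count low_first (A - {c})) = fact (N - 1) * l / s"
      using perm_count_low_first[of "A - {c}"] psubset.hyps psubset.prems by (simp add: same_c l_def s_def)
    moreover have "(\<Sum>x\<in>A - {c}. real (if high x then perm_count low_flanked (A - {x}) - perm_count right_flanked (A - {x})
          else perm_count low_flanked (A - {x}))) =
        real (nlow (A - {c})) * (fact (N - 1) * ((l - 1) * l) / (s * (s - 1)))
        + real (nhigh (A - {c})) * (fact (N - 1) * (l * (l + 1) - l) / (s * (s - 1)))
        + (real (card (A - {c})) - nlow (A - {c}) - nhigh (A - {c})) * (fact (N - 1) * (l * (l + 1)) / ((s + 1) * s))"
    proof (rule sum_by_class)
      fix x assume x: "x \<in> A - {c}" "low x"
      then have "nlow A = Suc (nlow (A - {x}))" "nhigh (A - {x}) = nhigh A"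
        using nlow_remove nhigh_remove psubset.hyps low_not_high by auto
      with x 3 show "real (if high x then perm_count low_flanked (A - {x}) - perm_count right_flanked (A - {x})
          else perm_count low_flanked (A - {x})) = fact (N - 1) * ((l - 1) * l) / (s * (s - 1))"
        using IH[OF x(1)] low_not_high[of x] by (simp add: l_def s_def algebra_simps)
    next
      fix x assume x: "x \<in> A - {c}" "high x"
      then have less: "nhigh A = Suc (nhigh (A - {x}))" "nlow (A - {x}) = nlow A"
        using nlow_remove nhigh_remove psubset.hyps low_not_high by auto
      have flanked: "real (perm_count low_flanked (A - {x})) = fact (N - 1) * (l * (l + 1)) / (s * (s - 1))"
        using IH[OF x(1)] 3 by (simp add: less l_def s_def algebra_simps)
      have right: "real (perm_count right_flanked (A - {x})) = fact (N - 1) * l / (s * (s - 1))"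
        using x 3 psubset.hyps psubset.prems
        by (subst perm_count_right_flanked) (auto simp: less N_def l_def s_def algebra_simps)
      have "perm_count right_flanked (A - {x}) \<le> perm_count low_flanked (A - {x})"
        by (rule perm_count_mono) (rule low_flanked_if_right_flanked)
      then show "real (if high x then perm_count low_flanked (A - {x}) - perm_count right_flanked (A - {x})
          else perm_count low_flanked (A - {x})) = fact (N - 1) * (l * (l + 1) - l) / (s * (s - 1))"
        using x flanked right by (simp add: of_nat_diff right_diff_distrib diff_divide_distrib)
    next
      fix x assume x: "x \<in> A - {c}" "mid x"
      then have "nlow (A - {x}) = nlow A" "nhigh (A - {x}) = nhigh A"
        using nlow_remove nhigh_remove psubset.hyps by (auto simp: mid_def)
      with x show "real (if high x then perm_count low_flanked (A - {x}) - perm_count right_flanked (A - {x})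
          else perm_count low_flanked (A - {x})) = fact (N - 1) * (l * (l + 1)) / ((s + 1) * s)"
        using IH[OF x(1)] psubset.prems by (simp add: mid_def l_def s_def algebra_simps)
    qed (use psubset.hyps in simp)
    ultimately have "real (perm_count low_flanked A) = fact (N - 1) * l / s
        + (l * (fact (N - 1) * ((l - 1) * l) / (s * (s - 1)))
        + h * (fact (N - 1) * (l * (l + 1) - l) / (s * (s - 1)))
        + (real N - 1 - l - h) * (fact (N - 1) * (l * (l + 1)) / ((s + 1) * s)))"
      using same_c \<open>N > 0\<close> psubset.hyps psubset.prems
      by (simp add: perm_count_low_flanked_recurrence of_nat_sum l_def h_def of_nat_diff)
    also have "\<dots> = fact N * (l * (l + 1)) / ((s + 1) * s)"
      using \<open>s > 1\<close> \<open>s = l + h\<close> unfolding fact_N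
      by (simp add: divide_simps) (simp add: algebra_simps)
    finally show ?thesis
      by (simp add: N_def l_def s_def algebra_simps)
  qed
qed

end

section \<open>\<open>k\<close>-peaks\<close>

locale peak_value =
  fixes j k :: nat
  assumes k_pos: "0 < k"

sublocale peak_value \<subseteq> low_high "\<lambda>x. x + k \<le> j" "\<lambda>x. j < x" j
  using k_pos by unfold_locales auto

context peak_value
begin

lemma low_first_left_if_k_ascending:
  assumes w: "w = xs @ j # ys" and asc: "k_ascending w k s (length xs)"
  shows "low_first (rev xs) \<and> (\<exists>x\<in>set xs. x + k \<le> j)"
proof -
  have "w ! length xs = j"
    using w by simp
  then have s: "s < length xs" and low_s: "w ! s + k \<le> j"
    and bounds: "\<And>r. s \<le> r \<Longrightarrow> r \<le> length xs \<Longrightarrow> w ! r \<le> j"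
    using asc by (auto simp: k_ascending_iff)
  have xs_s: "xs ! s = w ! s"
    using w s by (simp add: nth_append)
  have "\<not> j < x" if "x \<in> set (drop s xs)" for x
  proof -
    obtain r where "r < length xs - s" "x = xs ! (s + r)"
      using \<open>x \<in> set (drop s xs)\<close> by (auto simp: in_set_conv_nth)
    moreover from this have "s + r < length xs"
      by linarith
    ultimately show ?thesis
      using bounds[of "s + r"] w by (simp add: nth_append)
  qed
  moreover have "xs ! s \<in> set (drop s xs)"
    using s by (simp add: Cons_nth_drop_Suc[symmetric])
  moreover have "rev xs = rev (drop s xs) @ rev (take s xs)"
    by (simp flip: rev_append)
  ultimately have "low_first (rev xs)"
    using low_s xs_s by (auto simp: low_first_append mid_def intro: low_first_if_no_high)
  then show ?thesis
    using s xs_s low_s by (metis nth_mem)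
qed

lemma low_first_right_if_max_k_ascending:
  assumes w: "w = xs @ j # ys" and max: "max_k_ascending w k s (length xs)"
  shows "low_first ys"
proof (rule ccontr)
  let ?i = "length xs"
  have w_i: "w ! ?i = j"
    using w by simp
  have "k_ascending w k s ?i"
    using max by (simp add: max_k_ascending_def)
  then have s: "s < ?i" and low_s: "w ! s + k \<le> j"
    and bounds: "\<And>r. s \<le> r \<Longrightarrow> r \<le> ?i \<Longrightarrow> w ! s \<le> w ! r \<and> w ! r \<le> j"
    and no_down: "\<And>a b. s \<le> a \<Longrightarrow> a < b \<Longrightarrow> b \<le> ?i \<Longrightarrow> w ! a < w ! b + k"
    using w_i by (auto simp: k_ascending_iff)
  assume "\<not> low_first ys"
  then obtain us y vs where ys: "ys = us @ y # vs" "\<forall>x\<in>set us. mid x" "j < y"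
    using split_high_if_not_low_first by blast
  \<comment> \<open>The section from \<open>s\<close> then extends up to the high entry \<open>y\<close>, contradicting maximality.\<close>
  define t where "t = Suc (?i + length us)"
  have w_t: "w ! t = y"
    using w ys by (simp add: t_def nth_append)
  have s_t: "s < t"
    using s by (simp add: t_def)
  have segment: "w ! s \<le> w ! r \<and> w ! r \<le> j \<and> (?i \<le> r \<longrightarrow> j < w ! r + k)"
    if r: "s \<le> r" "r < t" for r
  proof (cases "?i < r")
    case True
    then obtain q where q: "r = Suc (?i + q)"
      using less_imp_Suc_add by blast
    with r have "q < length us"
      by (simp add: t_def)
    have "w ! r = us ! q"
      using \<open>q < length us\<close> by (simp only: q w ys nth_append_Cons_Suc) (simp add: nth_append)
    then have "mid (w ! r)"
      using ys(2) \<open>q < length us\<close> nth_mem by metis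
    then show ?thesis
      using True low_s by (auto simp: mid_def)
  next
    case False
    then show ?thesis
      using bounds[of r] r w_i k_pos by (cases "r = ?i") auto
  qed
  have "k_ascending w k s t"
    unfolding k_ascending_iff
  proof (intro conjI allI impI)
    show "s < t"
      by (fact s_t)
    show "t < length w"
      using w ys by (simp add: t_def)
    show "w ! s + k \<le> w ! t"
      using low_s ys(3) w_t by simp
  next
    fix r assume "s \<le> r" "r \<le> t"
    then show "w ! s \<le> w ! r"
      using segment[of r] segment[of s] s_t ys(3) by (cases "r = t") (auto simp: w_t)
  next
    fix r assume "s \<le> r" "r \<le> t"
    then show "w ! r \<le> w ! t"
      using segment[of r] ys(3) by (cases "r = t") (auto simp: w_t)
  next
    fix a b assume ab: "s \<le> a" "a < b" "b \<le> t"
    show "w ! a < w ! b + k"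
    proof (cases "b < ?i")
      case True
      then show ?thesis
        using no_down ab by simp
    next
      case False
      then have "j < w ! b + k"
        using segment[of b] ab ys(3) by (cases "b = t") (auto simp: w_t)
      then show ?thesis
        using segment[of a] ab by linarith
    qed
  qed
  moreover have "?i \<le> t" "(s, t) \<noteq> (s, ?i)"
    by (simp_all add: t_def)
  ultimately show False
    using max unfolding max_k_ascending_def by blast
qed

lemma k_ascending_from_nearest_low:
  assumes w: "w = xs @ j # ys" and left: "low_first (rev xs)" and "\<exists>x\<in>set xs. x + k \<le> j"
  shows "\<exists>s. k_ascending w k s (length xs)"
proof -
  let ?i = "length xs"
  obtain us x vs where "rev xs = us @ x # vs" "\<forall>y\<in>set us. mid y" "x + k \<le> j"
    using split_low_if_low_first[OF left] assms(3) by auto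
  then obtain pre ms where xs: "xs = pre @ x # ms" and ms: "\<forall>y\<in>set ms. mid y"
    by (intro that[of "rev vs" "rev us"]) (simp_all add: rev_swap)
  let ?s = "length pre"
  have w_s: "w ! ?s = x" and w_i: "w ! ?i = j"
    using w xs by (simp_all add: nth_append)
  have segment: "w ! r \<le> j \<and> j < w ! r + k" if r: "?s < r" "r \<le> ?i" for r
  proof (cases "r = ?i")
    case True
    then show ?thesis
      using w_i k_pos by simp
  next
    case False
    obtain q where q: "r = Suc (?s + q)"
      using less_imp_Suc_add[OF r(1)] by blast
    have "q < length ms"
      using r(2) False q xs by simp
    have "w ! r = ms ! q"
      using \<open>q < length ms\<close> by (simp only: q w xs append_assoc append_Cons nth_append_Cons_Suc)
        (simp add: nth_append)
    then have "mid (w ! r)"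
      using ms \<open>q < length ms\<close> nth_mem by metis
    then show ?thesis
      unfolding mid_def by linarith
  qed
  have "k_ascending w k ?s ?i"
    unfolding k_ascending_iff
  proof (intro conjI allI impI)
    show "?s < ?i" "?i < length w"
      using w xs by simp_all
    show "w ! ?s + k \<le> w ! ?i"
      using w_s w_i \<open>x + k \<le> j\<close> by simp
  next
    fix r assume "?s \<le> r" "r \<le> ?i"
    then show "w ! ?s \<le> w ! r" "w ! r \<le> w ! ?i"
      using segment[of r] w_s w_i \<open>x + k \<le> j\<close> by (cases "r = ?s"; force)+
  next
    fix a b assume "?s \<le> a" "a < b" "b \<le> ?i"
    then show "w ! a < w ! b + k"
      using segment[of a] segment[of b] w_s \<open>x + k \<le> j\<close> by (cases "a = ?s") auto
  qed
  then show ?thesis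
    by blast
qed

lemma max_k_ascending_if_low_first_right:
  assumes w: "w = xs @ j # ys" and "j \<notin> set ys" and right: "low_first ys"
    and "k_ascending w k s (length xs)"
  shows "\<exists>s. max_k_ascending w k s (length xs)"
proof -
  let ?i = "length xs"
  have w_i: "w ! ?i = j"
    using w by simp
  obtain s0 where s0: "k_ascending w k s0 ?i" and least: "\<And>s. s < s0 \<Longrightarrow> \<not> k_ascending w k s ?i"
    using exists_least_iff[of "\<lambda>s. k_ascending w k s ?i"] assms(4) by blast
  \<comment> \<open>A longer section would end on a high entry right of \<open>j\<close>; the low entry preceding it is a \<open>k\<close>-down.\<close>
  have "max_k_ascending w k s0 ?i"
    unfolding max_k_ascending_def
  proof (intro conjI s0 notI)
    assume "\<exists>a b. a \<le> s0 \<and> ?i \<le> b \<and> (a, b) \<noteq> (s0, ?i) \<and> k_ascending w k a b"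
    then obtain a b where ab: "a \<le> s0" "?i \<le> b" "(a, b) \<noteq> (s0, ?i)" "k_ascending w k a b"
      by blast
    show False
    proof (cases "b = ?i")
      case True
      then have "a < s0"
        using ab(1,3) by auto
      then show False
        using least ab(4) True by blast
    next
      case False
      then obtain q where b: "b = Suc (?i + q)"
        using ab(2) less_imp_Suc_add by (metis le_neq_implies_less)
      have "a < ?i"
        using ab(1) s0 by (simp add: k_ascending_iff)
      have bounds_ab: "b < length w" "\<And>r. a \<le> r \<Longrightarrow> r \<le> b \<Longrightarrow> w ! r \<le> w ! b"
        and no_down_ab: "\<And>a' b'. a \<le> a' \<Longrightarrow> a' < b' \<Longrightarrow> b' \<le> b \<Longrightarrow> w ! a' < w ! b' + k"
        using ab(4) by (auto simp: k_ascending_iff)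
      have "q < length ys"
        using bounds_ab(1) w b by simp
      have "w ! b = ys ! q"
        using w b by (simp add: nth_append_Cons_Suc)
      then have "j \<le> ys ! q"
        using bounds_ab(2)[of ?i] \<open>a < ?i\<close> ab(2) w_i by simp
      moreover have "ys ! q \<noteq> j"
        using \<open>q < length ys\<close> \<open>j \<notin> set ys\<close> nth_mem by metis
      ultimately have "j < ys ! q"
        by simp
      moreover have "ys = take q ys @ ys ! q # drop (Suc q) ys"
        using \<open>q < length ys\<close> by (simp add: id_take_nth_drop)
      ultimately obtain y where "y \<in> set (take q ys)" "y + k \<le> j"
        using low_before_high_if_low_first right by metis
      then obtain q' where "q' < q" "ys ! q' + k \<le> j"
        by (auto simp: in_set_conv_nth)
      moreover have "w ! Suc (?i + q') = ys ! q'"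
        using w by (simp add: nth_append_Cons_Suc)
      moreover have "w ! ?i < w ! Suc (?i + q') + k"
        using no_down_ab[of ?i "Suc (?i + q')"] \<open>a < ?i\<close> \<open>q' < q\<close> b by simp
      ultimately show False
        using w_i by simp
    qed
  qed
  then show ?thesis
    by blast
qed

lemma ex_max_k_ascending_iff:
  assumes w: "w = xs @ j # ys" and "j \<notin> set ys"
  shows "(\<exists>s. max_k_ascending w k s (length xs)) \<longleftrightarrow>
    low_first (rev xs) \<and> low_first ys \<and> (\<exists>x\<in>set xs. x + k \<le> j)"
proof
  assume "\<exists>s. max_k_ascending w k s (length xs)"
  then obtain s where "max_k_ascending w k s (length xs)"
    by blast
  then show "low_first (rev xs) \<and> low_first ys \<and> (\<exists>x\<in>set xs. x + k \<le> j)"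
    using low_first_left_if_k_ascending[OF w] low_first_right_if_max_k_ascending[OF w]
    unfolding max_k_ascending_def by blast
next
  assume "low_first (rev xs) \<and> low_first ys \<and> (\<exists>x\<in>set xs. x + k \<le> j)"
  then show "\<exists>s. max_k_ascending w k s (length xs)"
    using k_ascending_from_nearest_low[OF w] max_k_ascending_if_low_first_right[OF w assms(2)] by blast
qed

lemma k_peak_pos_iff:
  assumes "distinct w" and w: "w = xs @ j # ys"
  shows "k_peak_pos w k (length xs) \<longleftrightarrow> low_flanked w \<and> (\<exists>x\<in>set w. x + k \<le> j)"
proof -
  have j: "j \<notin> set xs" "j \<notin> set ys"
    using assms by auto
  have rev_w: "rev w = rev ys @ j # rev xs"
    using w by simp
  have "(\<exists>t. max_k_descending w k (length xs) t) \<longleftrightarrow> (\<exists>s. max_k_ascending (rev w) k s (length (rev ys)))"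
    using ex_max_k_descending_iff_rev[of "length xs" w k] w by simp
  also have "\<dots> \<longleftrightarrow> low_first (rev xs) \<and> low_first ys \<and> (\<exists>x\<in>set ys. x + k \<le> j)"
    using ex_max_k_ascending_iff[OF rev_w] j(1) by auto
  finally have desc: "(\<exists>t. max_k_descending w k (length xs) t) \<longleftrightarrow>
      low_first (rev xs) \<and> low_first ys \<and> (\<exists>x\<in>set ys. x + k \<le> j)" .
  have "low_flanked w \<longleftrightarrow> low_first (rev xs) \<and> low_first ys"
    using low_flanked_split j w by simp
  then show ?thesis
    using ex_max_k_ascending_iff[OF w j(2)] desc w k_pos unfolding k_peak_pos_def by auto
qed

lemma is_k_peak_value_iff:
  assumes "distinct w" "j \<in> set w"
  shows "is_k_peak_value w k j \<longleftrightarrow> low_flanked w \<and> (\<exists>x\<in>set w. x + k \<le> j)"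
proof -
  obtain xs ys where w: "w = xs @ j # ys"
    using split_list assms(2) by metis
  have unique: "i = length xs" if "i < length w" "w ! i = j" for i
    using that assms(1) w nth_eq_iff_index_eq[of w i "length xs"] by simp
  have "length xs < length w" "w ! length xs = j"
    using w by simp_all
  then have "is_k_peak_value w k j \<longleftrightarrow> k_peak_pos w k (length xs)"
    using unique unfolding is_k_peak_value_def by blast
  then show ?thesis
    using k_peak_pos_iff[OF assms(1) w] by simp
qed

lemma card_permutations_k_peak_value:
  assumes "1 \<le> j" "j \<le> n"
  shows "card {w \<in> permutations_of_set {1..n}. is_k_peak_value w k j} =
    (if j \<le> k then 0 else perm_count low_flanked {1..n})"
proof -
  have "is_k_peak_value w k j \<longleftrightarrow> low_flanked w \<and> k < j" if "w \<in> permutations_of_set {1..n}" for w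
  proof -
    have "distinct w" "set w = {1..n}"
      using that by (simp_all add: permutations_of_set_def)
    moreover have "(\<exists>x\<in>{1..n}. x + k \<le> j) \<longleftrightarrow> k < j"
      using assms by force
    ultimately show ?thesis
      using is_k_peak_value_iff[of w] assms by auto
  qed
  then have "{w \<in> permutations_of_set {1..n}. is_k_peak_value w k j} =
      {w \<in> permutations_of_set {1..n}. low_flanked w \<and> k < j}"
    by blast
  then show ?thesis
    by (cases "j \<le> k") (simp_all add: perm_count_def)
qed

lemma nlow_nhigh_atLeastAtMost:
  assumes "k < j" "j \<le> n"
  shows "nlow {1..n} = j - k" "nhigh {1..n} = n - j"
proof -
  have "{x \<in> {1..n}. x + k \<le> j} = {1..j - k}" "{x \<in> {1..n}. j < x} = {j + 1..n}"
    using assms by auto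
  then show "nlow {1..n} = j - k" "nhigh {1..n} = n - j"
    by (simp_all add: nlow_def nhigh_def)
qed

end


theorem proposition3p3:
  fixes n j k :: nat
  assumes "n \<ge> 2" and "1 \<le> j" and "j \<le> n" and "1 \<le> k" and "k \<le> n - 1"
  shows "p_peak n k j =
    (if j \<le> k then 0
     else real ((j - k) * (j - k + 1)) / real ((n - k) * (n - k + 1)))"
proof -
  interpret peak_value j k
    using assms(4) by unfold_locales simp
  have peaks: "card {w \<in> permutations_of_set {1..n}. is_k_peak_value w k j} =
      (if j \<le> k then 0 else perm_count low_flanked {1..n})"
    using card_permutations_k_peak_value assms(2,3) .
  show ?thesis
  proof (cases "j \<le> k")
    case True
    then show ?thesis
      using peaks by (simp add: p_peak_def)
  next
    case False
    define l s where "l = j - k" and "s = n - k"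
    have "nlow {1..n} = l" "nlow {1..n} + nhigh {1..n} = s" "0 < s"
      using nlow_nhigh_atLeastAtMost[of n] False assms(3) by (simp_all add: l_def s_def)
    then have "real (perm_count low_flanked {1..n}) =
        fact n * (real l * (real l + 1)) / ((real s + 1) * real s)"
      using perm_count_low_flanked[of "{1..n}"] assms(2,3) by simp
    then have "p_peak n k j = real l * (real l + 1) / ((real s + 1) * real s)"
      using peaks False by (simp add: p_peak_def)
    then show ?thesis
      using False unfolding l_def[symmetric] s_def[symmetric] by (simp add: algebra_simps)
  qed
qed

end
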